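(* Let $X$ be a Hausdorff complex topological vector space with $\dim X>1$. Let $\Gamma\subset\mathcal{B}(X)$ have the property that for all $T,S\in\Gamma$ with $T\neq S$ there exists $A\in\Gamma$ such that $T=AS$. If $\Gamma$ is supercyclic, then $\Gamma$ is supercyclic transitive.
   Context: $\mathcal{B}(X)$ denotes the space of continuous linear operators on $X$. For $\Gamma\subset\mathcal{B}(X)$ and $x\in X$, put $\mathbb{C}\,Orb(\Gamma,x)=\{\alpha Tx:\alpha\in\mathbb{C},\,T\in\Gamma\}$. The set $\Gamma$ is called supercyclic if there exists $x\in X$ such that $\mathbb{C}\,Orb(\Gamma,x)$ is dense in $X$. A set $\Gamma\subset\mathcal{B}(X)$ is called supercyclic transitive if, for each pair $(U,V)$ of nonempty open subsets of $X$, there exist $\alpha\in\mathbb{C}\setminus\{0\}$ and $T\in\Gamma$ such that $T(\alpha U)\cap V\neq\emptyset$. *)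

theory Defs
  imports "HOL-Analysis.Analysis"
begin

text \<open>A complex topological vector space: the carrier type 'a carries a topology
  (Hausdorffness is imposed via the class t2_space in the theorem) and an additive
  group structure; scal is the complex scalar multiplication.\<close>
definition complex_tvs :: "(complex \<Rightarrow> 'a::{ab_group_add, topological_space} \<Rightarrow> 'a) \<Rightarrow> bool" where
  "complex_tvs scal \<longleftrightarrow>
     vector_space scal \<and>
     continuous_on UNIV (\<lambda>p::'a \<times> 'a. fst p + snd p) \<and>
     continuous_on UNIV (\<lambda>p::complex \<times> 'a. scal (fst p) (snd p))"

text \<open>dim X > 1, i.e. X is not spanned by a single vector (this also covers the
  infinite-dimensional case, where the library's dim returns 0).\<close>
definition dim_gt_one :: "(complex \<Rightarrow> 'a::ab_group_add \<Rightarrow> 'a) \<Rightarrow> bool" where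
  "dim_gt_one scal \<longleftrightarrow> (\<forall>v. module.span scal {v} \<noteq> UNIV)"

definition cont_ops :: "(complex \<Rightarrow> 'a::{ab_group_add, topological_space} \<Rightarrow> 'a) \<Rightarrow> ('a \<Rightarrow> 'a) set" where
  "cont_ops scal = {T. Vector_Spaces.linear scal scal T \<and> continuous_on UNIV T}"

definition C_orb :: "(complex \<Rightarrow> 'a \<Rightarrow> 'a) \<Rightarrow> ('a \<Rightarrow> 'a) set \<Rightarrow> 'a \<Rightarrow> 'a set" where
  "C_orb scal \<Gamma> x = {scal \<alpha> (T x) | \<alpha> T. T \<in> \<Gamma>}"

definition supercyclic :: "(complex \<Rightarrow> 'a::topological_space \<Rightarrow> 'a) \<Rightarrow> ('a \<Rightarrow> 'a) set \<Rightarrow> bool" where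
  "supercyclic scal \<Gamma> \<longleftrightarrow> (\<exists>x. closure (C_orb scal \<Gamma> x) = UNIV)"

definition supercyclic_transitive :: "(complex \<Rightarrow> 'a::topological_space \<Rightarrow> 'a) \<Rightarrow> ('a \<Rightarrow> 'a) set \<Rightarrow> bool" where
  "supercyclic_transitive scal \<Gamma> \<longleftrightarrow>
     (\<forall>U V. open U \<and> U \<noteq> {} \<and> open V \<and> V \<noteq> {} \<longrightarrow>
        (\<exists>\<alpha> T. \<alpha> \<noteq> 0 \<and> T \<in> \<Gamma> \<and> T ` (scal \<alpha> ` U) \<inter> V \<noteq> {}))"

end

theory Submission
  imports Defs
begin

text \<open>Pick a supercyclic vector x. Density of its projective orbit gives \<beta> T x \<in> V with
  \<beta> T x \<noteq> 0, and then \<alpha> S x \<in> U off the line through T x; such points exist because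
  lines are closed (Hausdorffness) and nonempty open sets are not contained in a line
  (dim X > 1). Then S \<noteq> T, so T = A S for some A \<in> \<Gamma>, and A maps the point
  (\<beta>/\<alpha>)(\<alpha> S x) of (\<beta>/\<alpha>) U to \<beta> T x \<in> V.\<close>

lemma complex_tvs_module: "complex_tvs scal \<Longrightarrow> module scal"
  unfolding complex_tvs_def vector_space_def by (auto intro: module.intro)

lemma complex_tvs_continuous_scal_left:
  assumes "complex_tvs scal"
  shows "continuous_on UNIV (\<lambda>t. scal t v)"
proof -
  have "continuous_on UNIV (\<lambda>p::complex \<times> 'a. scal (fst p) (snd p))"
    using assms unfolding complex_tvs_def by auto
  from continuous_on_compose2[OF this continuous_on_Pair[OF continuous_on_id continuous_on_const]]
  show ?thesis by simp
qed

lemma complex_tvs_continuous_affine_line: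
  assumes "complex_tvs scal"
  shows "continuous_on UNIV (\<lambda>t. w + scal t v)"
proof -
  have "continuous_on UNIV (\<lambda>p::'a \<times> 'a. fst p + snd p)"
    using assms unfolding complex_tvs_def by auto
  from continuous_on_compose2[OF this
      continuous_on_Pair[OF continuous_on_const complex_tvs_continuous_scal_left[OF assms]]]
  show ?thesis by simp
qed

text \<open>Joint continuity of scalar multiplication at (0, y), together with a neighbourhood of
  0 missing v, bounds the coefficients of the points of the line that lie near y.\<close>
lemma complex_tvs_line_coeffs_locally_bounded:
  fixes scal :: "complex \<Rightarrow> 'a::{ab_group_add, t1_space} \<Rightarrow> 'a"
  assumes tvs: "complex_tvs scal" and "v \<noteq> 0"
  obtains B r where "open B" "y \<in> B" "\<And>c. scal c v \<in> B \<Longrightarrow> norm c \<le> r"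
proof -
  interpret module scal using complex_tvs_module[OF tvs] .
  obtain W where W: "open W" "0 \<in> W" "v \<notin> W"
    using t1_space[of 0 v] \<open>v \<noteq> 0\<close> by auto
  let ?f = "\<lambda>p::complex \<times> 'a. scal (fst p) (snd p)"
  have "continuous_on UNIV ?f" using tvs unfolding complex_tvs_def by auto
  then have "open (?f -` W)" using W(1) continuous_on_open_vimage[of UNIV ?f] by auto
  moreover have "(0, y) \<in> ?f -` W" using W by simp
  ultimately obtain A B where AB: "open A" "open B" "(0, y) \<in> A \<times> B" "A \<times> B \<subseteq> ?f -` W"
    by (rule open_prod_elim)
  obtain d where d: "d > 0" "ball 0 d \<subseteq> A"
    using AB(1,3) open_contains_ball by blast
  have "norm c \<le> 1/d" if c: "scal c v \<in> B" for c
  proof (rule ccontr)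
    assume "\<not> norm c \<le> 1/d"
    then have "norm c > 1/d" by simp
    then have "norm (inverse c) < d" "c \<noteq> 0"
      using less_imp_inverse_less[of "1/d" "norm c"] d by (auto simp: norm_inverse)
    then have "inverse c \<in> A" using d by auto
    with c have "(inverse c, scal c v) \<in> ?f -` W" by (intro subsetD[OF AB(4)]) simp
    then have "scal (inverse c) (scal c v) \<in> W" by simp
    with \<open>c \<noteq> 0\<close> W(3) show False by simp
  qed
  with AB(2,3) that show ?thesis by blast
qed

lemma complex_tvs_closed_line:
  fixes scal :: "complex \<Rightarrow> 'a::{ab_group_add, t2_space} \<Rightarrow> 'a"
  assumes tvs: "complex_tvs scal"
  shows "closed (range (\<lambda>c. scal c v))"
proof (cases "v = 0")
  case True
  interpret module scal using complex_tvs_module[OF tvs] .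
  show ?thesis using True by (simp add: image_constant_conv)
next
  case False
  let ?L = "range (\<lambda>c. scal c v)"
  have "y \<in> ?L" if y: "y \<in> closure ?L" for y
  proof -
    obtain B r where B: "open B" "y \<in> B" "\<And>c. scal c v \<in> B \<Longrightarrow> norm c \<le> r"
      using complex_tvs_line_coeffs_locally_bounded[OF tvs False] by blast
    let ?K = "(\<lambda>c. scal c v) ` cball 0 r"
    have "compact ?K"
      by (rule compact_continuous_image)
        (auto intro: continuous_on_subset[OF complex_tvs_continuous_scal_left[OF tvs]])
    have "y \<in> B \<inter> closure ?L" using y B(2) by auto
    also have "\<dots> \<subseteq> closure (B \<inter> ?L)" by (rule open_Int_closure_subset[OF B(1)])
    also have "\<dots> \<subseteq> closure ?K" using B(3) by (intro closure_mono) auto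
    also have "\<dots> = ?K" using \<open>compact ?K\<close> by (simp add: compact_imp_closed)
    finally show "y \<in> ?L" by auto
  qed
  then show ?thesis using closure_subset_eq by blast
qed

lemma complex_tvs_open_not_subset_line:
  fixes scal :: "complex \<Rightarrow> 'a::{ab_group_add, topological_space} \<Rightarrow> 'a"
  assumes tvs: "complex_tvs scal" and dim: "dim_gt_one scal"
    and W: "open W" "W \<noteq> {}"
  shows "\<not> W \<subseteq> range (\<lambda>c. scal c v)"
proof
  assume sub: "W \<subseteq> range (\<lambda>c. scal c v)"
  interpret module scal using complex_tvs_module[OF tvs] .
  obtain y where y: "y \<notin> range (\<lambda>c. scal c v)"
    using dim unfolding dim_gt_one_def by (auto simp: span_singleton)
  obtain w where "w \<in> W" using W by auto
  then obtain c0 where c0: "w = scal c0 v" using sub by auto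
  let ?g = "\<lambda>t. w + scal t y"
  have "open (?g -` W)"
    using W(1) complex_tvs_continuous_affine_line[OF tvs] continuous_on_open_vimage[of UNIV ?g]
    by auto
  moreover have "0 \<in> ?g -` W" using \<open>w \<in> W\<close> by simp
  ultimately obtain e where e: "e > 0" "ball 0 e \<subseteq> ?g -` W"
    using open_contains_ball by blast
  define t where "t = complex_of_real (e/2)"
  have "t \<noteq> 0" "t \<in> ball 0 e" using e by (auto simp: t_def)
  then obtain c1 where "w + scal t y = scal c1 v" using e sub by blast
  then have "scal t y = scal (c1 - c0) v" using c0 by (simp add: scale_left_diff_distrib algebra_simps)
  then have "y = scal (inverse t * (c1 - c0)) v"
    using \<open>t \<noteq> 0\<close> by (metis scale_scale left_inverse scale_one)
  then show False using y by auto
qed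

lemma complex_tvs_dense_meets_open_off_line:
  fixes scal :: "complex \<Rightarrow> 'a::{ab_group_add, t2_space} \<Rightarrow> 'a"
  assumes tvs: "complex_tvs scal" and dim: "dim_gt_one scal"
    and dense: "closure D = UNIV" and W: "open W" "W \<noteq> {}"
  obtains y where "y \<in> D" "y \<in> W" "y \<notin> range (\<lambda>c. scal c v)"
proof -
  let ?O = "W - range (\<lambda>c. scal c v)"
  have "open ?O" using W(1) complex_tvs_closed_line[OF tvs] by (intro open_Diff)
  moreover have "?O \<noteq> {}" using complex_tvs_open_not_subset_line[OF tvs dim W] by auto
  ultimately have "?O \<inter> D \<noteq> {}" using dense open_Int_closure_eq_empty by blast
  with that show ?thesis by blast
qed

theorem theorem3p8:
  fixes scal :: "complex \<Rightarrow> 'a::{ab_group_add, t2_space} \<Rightarrow> 'a"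
    and \<Gamma> :: "('a \<Rightarrow> 'a) set"
  assumes "complex_tvs scal"
    and "dim_gt_one scal"
    and "\<Gamma> \<subseteq> cont_ops scal"
    and "\<forall>T\<in>\<Gamma>. \<forall>S\<in>\<Gamma>. T \<noteq> S \<longrightarrow> (\<exists>A\<in>\<Gamma>. T = A \<circ> S)"
    and "supercyclic scal \<Gamma>"
  shows "supercyclic_transitive scal \<Gamma>"
  unfolding supercyclic_transitive_def
proof (intro allI impI)
  fix U V :: "'a set"
  assume UV: "open U \<and> U \<noteq> {} \<and> open V \<and> V \<noteq> {}"
  interpret module scal using complex_tvs_module[OF assms(1)] .
  obtain x where x: "closure (C_orb scal \<Gamma> x) = UNIV"
    using assms(5) unfolding supercyclic_def by auto
  obtain \<beta> T where T: "T \<in> \<Gamma>" "scal \<beta> (T x) \<in> V" "scal \<beta> (T x) \<notin> range (\<lambda>c. scal c 0)"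
    using complex_tvs_dense_meets_open_off_line[OF assms(1,2) x, of V 0] UV
    unfolding C_orb_def by blast
  obtain \<alpha> S where S: "S \<in> \<Gamma>" "scal \<alpha> (S x) \<in> U" "scal \<alpha> (S x) \<notin> range (\<lambda>c. scal c (T x))"
    using complex_tvs_dense_meets_open_off_line[OF assms(1,2) x, of U "T x"] UV
    unfolding C_orb_def by blast
  have "\<beta> \<noteq> 0" "\<alpha> \<noteq> 0" "S \<noteq> T" using T(3) S(3) by (auto simp: image_iff) (metis scale_zero_left)
  then obtain A where A: "A \<in> \<Gamma>" "T = A \<circ> S" using assms(4) S(1) T(1) by metis
  then have "Vector_Spaces.linear scal scal A" using assms(3) unfolding cont_ops_def by auto
  then have "A (scal (\<beta> / \<alpha>) (scal \<alpha> (S x))) = scal \<beta> (T x)"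
    using \<open>\<alpha> \<noteq> 0\<close> A(2) by (simp add: linear_iff_module_hom module_hom.scale)
  then have "A ` (scal (\<beta> / \<alpha>) ` U) \<inter> V \<noteq> {}" using S(2) T(2) by (metis IntI empty_iff image_eqI)
  moreover have "\<beta> / \<alpha> \<noteq> 0" using \<open>\<alpha> \<noteq> 0\<close> \<open>\<beta> \<noteq> 0\<close> by simp
  ultimately show "\<exists>\<alpha> T. \<alpha> \<noteq> 0 \<and> T \<in> \<Gamma> \<and> T ` (scal \<alpha> ` U) \<inter> V \<noteq> {}"
    using A(1) by blast
qed

end
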